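(* Let $m\ge2$ and $n\ge1$ be integers, let $f_i:\mathbb{R}^n\to\mathbb{R}$, $i=1,\dots,m$, be lower semicontinuous, proper and strictly convex, and let $a\ge 0$ and $\mathcal{Z}=\{\mathbf{z}\in\mathbb{R}^n\mid\|\mathbf{z}\|_\infty\le a\}$. Set $\mathcal{Y}=\mathcal{Z}^m\subseteq\mathbb{R}^{nm}$, $f_0(\mathbf{y})=\frac1m\sum_{i=1}^m f_i(\mathbf{y}_i)$ for $\mathbf{y}=[\mathbf{y}_1^{\mathsf T}\ \cdots\ \mathbf{y}_m^{\mathsf T}]^{\mathsf T}$, and $f=f_0+\delta_{\mathcal{Y}}$. Assume that for every $\bar{\mathbf{y}}\in\operatorname{bnd}\mathcal{Y}$ there exist a sequence $(\mathbf{y}_k)$ in $\mathcal{Y}$ with $\mathbf{y}_k\to\bar{\mathbf{y}}$ and subgradients $\boldsymbol{\nu}_k\in\partial f(\mathbf{y}_k)$ with $\limsup_k\|\boldsymbol{\nu}_k\|_2<\infty$. Let $\mathbf{A}\in\mathbb{R}^{n(m-1)\times nm}$ be the block matrix whose $i$-th block row ($i=1,\dots,m-1$) has $\mathbf{I}_n$ in block column $i$, $-\mathbf{I}_n$ in block column $i+1$, and zeros elsewhere. Let $\bar{\mathbf{y}}=[\bar{\mathbf{y}}_1^{\mathsf T}\ \cdots\ \bar{\mathbf{y}}_m^{\mathsf T}]^{\mathsf T}$ with $\bar{\mathbf{y}}_i=a\mathbf{1}_n$ for $i$ odd and $\bar{\mathbf{y}}_i=-a\mathbf{1}_n$ for $i$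 even, and let $\beta>0$. Then there exist $\boldsymbol{\eta}\in\mathbb{R}^{nm}$ and $\boldsymbol{\mu}\in\mathbb{R}^{n(m-1)}$ satisfying $$\mathbf{A}\bar{\mathbf{y}}=\beta(\mathbf{A}\mathbf{A}^{\mathsf T})^{-1}\mathbf{A}\boldsymbol{\eta},\qquad \boldsymbol{\eta}\in N_{\mathcal{Y}}(\bar{\mathbf{y}}),\qquad \mathbf{A}^{\mathsf T}\boldsymbol{\mu}=\boldsymbol{\eta}.$$
   Context: $\delta_{\mathcal{Y}}$ is the indicator function of $\mathcal{Y}$, $\partial$ the convex subdifferential, $N_{\mathcal{Y}}(\bar{\mathbf{y}})$ the normal cone of the convex set $\mathcal{Y}$ at $\bar{\mathbf{y}}$, $\mathbf{1}_n$ the all-ones vector in $\mathbb{R}^n$, $\mathbf{I}_n$ the identity. (This is the feasibility problem associated with the consensus problem: minimize $f_0(\mathbf{y})$ subject to $\mathbf{y}_i\in\mathcal{Z}$ for all $i$ and $\mathbf{A}\mathbf{y}=\mathbf{0}$.) *)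

theory Defs
  imports "Jordan_Normal_Form.Gauss_Jordan_Elimination" "HOL-Library.Extended_Real"
begin

text \<open>Vectors of R^d are represented as JNF vectors in carrier_vec d.\<close>

definition enorm :: "real vec \<Rightarrow> real" where
  "enorm v = sqrt (\<Sum>i<dim_vec v. (v $ i)^2)"

definition lsc_vec :: "nat \<Rightarrow> (real vec \<Rightarrow> real) \<Rightarrow> bool" where
  "lsc_vec d g \<longleftrightarrow> (\<forall>x\<in>carrier_vec d. \<forall>c. c < g x \<longrightarrow>
      (\<exists>\<delta>>0. \<forall>y\<in>carrier_vec d. enorm (y - x) < \<delta> \<longrightarrow> c < g y))"

definition strictly_convex_vec :: "nat \<Rightarrow> (real vec \<Rightarrow> real) \<Rightarrow> bool" where
  "strictly_convex_vec d g \<longleftrightarrow> (\<forall>x\<in>carrier_vec d. \<forall>y\<in>carrier_vec d. x \<noteq> y \<longrightarrow>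
      (\<forall>t::real. 0 < t \<and> t < 1 \<longrightarrow>
        g (t \<cdot>\<^sub>v x + (1 - t) \<cdot>\<^sub>v y) < t * g x + (1 - t) * g y))"

definition proper_vec :: "nat \<Rightarrow> (real vec \<Rightarrow> ereal) \<Rightarrow> bool" where
  "proper_vec d g \<longleftrightarrow> (\<forall>x\<in>carrier_vec d. g x \<noteq> -\<infinity>) \<and> (\<exists>x\<in>carrier_vec d. g x \<noteq> \<infinity>)"

definition Zbox :: "nat \<Rightarrow> real \<Rightarrow> real vec set" where
  "Zbox n a = {z \<in> carrier_vec n. (\<forall>j<n. \<bar>z $ j\<bar> \<le> a)}"

text \<open>The i-th block (i = 1..m) of y in R^(nm).\<close>
definition blk :: "nat \<Rightarrow> real vec \<Rightarrow> nat \<Rightarrow> real vec" where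
  "blk n y i = vec n (\<lambda>j. y $ ((i - 1) * n + j))"

definition Yset :: "nat \<Rightarrow> nat \<Rightarrow> real \<Rightarrow> real vec set" where
  "Yset n m a = {y \<in> carrier_vec (n * m). \<forall>i\<in>{1..m}. blk n y i \<in> Zbox n a}"

definition f0 :: "nat \<Rightarrow> nat \<Rightarrow> (nat \<Rightarrow> real vec \<Rightarrow> real) \<Rightarrow> real vec \<Rightarrow> real" where
  "f0 n m fs y = (1 / real m) * (\<Sum>i\<in>{1..m}. fs i (blk n y i))"

definition indic :: "'a set \<Rightarrow> 'a \<Rightarrow> ereal" where
  "indic C x = (if x \<in> C then 0 else \<infinity>)"

definition subdiff :: "nat \<Rightarrow> (real vec \<Rightarrow> ereal) \<Rightarrow> real vec \<Rightarrow> real vec set" where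
  "subdiff d g x = {\<nu> \<in> carrier_vec d. x \<in> carrier_vec d \<and> \<bar>g x\<bar> \<noteq> \<infinity> \<and>
      (\<forall>z\<in>carrier_vec d. g z \<ge> g x + ereal (\<nu> \<bullet> (z - x)))}"

definition normal_cone :: "nat \<Rightarrow> real vec set \<Rightarrow> real vec \<Rightarrow> real vec set" where
  "normal_cone d C x = (if x \<in> C then {\<eta> \<in> carrier_vec d. \<forall>y\<in>C. \<eta> \<bullet> (y - x) \<le> 0} else {})"

definition bnd :: "nat \<Rightarrow> real vec set \<Rightarrow> real vec set" where
  "bnd d C = {x \<in> carrier_vec d. \<forall>e>0.
      (\<exists>y\<in>C. enorm (y - x) < e) \<and> (\<exists>y\<in>carrier_vec d - C. enorm (y - x) < e)}"

definition Amat :: "nat \<Rightarrow> nat \<Rightarrow> real mat" where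
  "Amat n m = mat (n * (m - 1)) (n * m)
     (\<lambda>(r, c). if c = r then 1 else if c = r + n then -1 else 0)"

text \<open>ybar: block i is a*1 for odd i, -a*1 for even i (i = 1..m).\<close>
definition ybar :: "nat \<Rightarrow> nat \<Rightarrow> real \<Rightarrow> real vec" where
  "ybar n m a = vec (n * m) (\<lambda>k. if odd (k div n + 1) then a else - a)"

end

theory Submission imports Defs "Jordan_Normal_Form.Determinant" begin

text \<open>Only linear algebra is involved. Take \<open>\<mu> = \<beta>\<^sup>-\<^sup>1 A ybar\<close> and \<open>\<eta> = A\<^sup>T \<mu>\<close>. Since \<open>A\<^sup>T\<close> is
  injective (it is block bidiagonal with identity blocks), \<open>A A\<^sup>T\<close> is invertible and
  \<open>\<beta> (A A\<^sup>T)\<^sup>-\<^sup>1 A \<eta> = \<beta> \<mu> = A ybar\<close>. The blocks of \<open>ybar\<close> alternate between \<open>a\<one>\<close> and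
  \<open>-a\<one>\<close>, so every coordinate of \<open>A\<^sup>T A ybar\<close> is a nonnegative multiple of the sign of
  the same coordinate of \<open>ybar\<close>. Hence \<open>\<eta> \<bullet> ybar = a \<parallel>\<eta>\<parallel>\<^sub>1 \<ge> \<eta> \<bullet> y\<close> for every \<open>y\<close> in the
  box, i.e. \<open>\<eta>\<close> lies in the normal cone at the vertex \<open>ybar\<close>.\<close>

lemma mat_inverse_mult_vec_cancel:
  assumes M: "M \<in> carrier_mat p p" and B: "mat_inverse M = Some B" and v: "v \<in> carrier_vec p"
  shows "B *\<^sub>v (M *\<^sub>v v) = v"
proof -
  have "B * M = 1\<^sub>m p" "B \<in> carrier_mat p p" using mat_inverse(2)[OF M B] by auto
  then show ?thesis using assoc_mult_mat_vec[of B p p M p v] M v by simp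
qed

lemma mat_inverse_gram_not_None:
  fixes A :: "real mat"
  assumes A: "A \<in> carrier_mat p q"
    and ker: "\<And>v. v \<in> carrier_vec p \<Longrightarrow> transpose_mat A *\<^sub>v v = 0\<^sub>v q \<Longrightarrow> v = 0\<^sub>v p"
  shows "mat_inverse (A * transpose_mat A) \<noteq> None"
proof -
  let ?G = "A * transpose_mat A"
  have G: "?G \<in> carrier_mat p p" using A by simp
  have "v = 0\<^sub>v p" if v: "v \<in> carrier_vec p" and Gv: "?G *\<^sub>v v = 0\<^sub>v p" for v
  proof -
    let ?w = "transpose_mat A *\<^sub>v v"
    have w: "?w \<in> carrier_vec q" using A v by simp
    have "?w \<bullet> ?w = v \<bullet> (A *\<^sub>v ?w)"
      using transpose_vec_mult_scalar[OF A w v] .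
    also have "\<dots> = v \<bullet> (?G *\<^sub>v v)"
      using assoc_mult_mat_vec[of A p q "transpose_mat A" p v] A v by simp
    also have "\<dots> = 0" using Gv v by simp
    finally have "?w \<bullet>c ?w = 0" by simp
    then show ?thesis using ker v conjugate_square_eq_0_vec[OF w] by blast
  qed
  then have "det ?G \<noteq> 0" using det_0_iff_vec_prod_zero[OF G] by blast
  then have "?G \<in> Units (ring_mat TYPE(real) p p)" by (rule det_non_zero_imp_unit[OF G])
  then show ?thesis using mat_inverse(1)[OF G, of p] by blast
qed

lemma normal_cone_smult:
  assumes "C \<subseteq> carrier_vec d" and "0 \<le> t" and "\<eta> \<in> normal_cone d C x"
  shows "t \<cdot>\<^sub>v \<eta> \<in> normal_cone d C x"
proof -
  have "(t \<cdot>\<^sub>v \<eta>) \<bullet> (y - x) \<le> 0" if "y \<in> C" for y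
  proof -
    have "\<eta> \<bullet> (y - x) \<le> 0" "\<eta> \<in> carrier_vec d" "x \<in> C"
      using assms(3) \<open>y \<in> C\<close> by (auto simp: normal_cone_def split: if_splits)
    moreover have "y \<in> carrier_vec d" "x \<in> carrier_vec d" using assms(1) \<open>y \<in> C\<close> \<open>x \<in> C\<close> by blast+
    ultimately show ?thesis
      using \<open>0 \<le> t\<close> by (simp add: mult_nonneg_nonpos)
  qed
  then show ?thesis using assms(3) by (auto simp: normal_cone_def split: if_splits)
qed

lemma Yset_nth_abs_le:
  assumes n: "0 < n" and y: "y \<in> Yset n m a" and c: "c < n * m"
  shows "\<bar>y $ c\<bar> \<le> a"
proof -
  define i where "i = c div n + 1"
  have i: "i \<in> {1..m}"
    using c n by (simp add: i_def less_mult_imp_div_less mult.commute Suc_leI)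
  have "\<bar>blk n y i $ (c mod n)\<bar> \<le> a"
    using y i n by (simp add: Yset_def Zbox_def)
  moreover have "blk n y i $ (c mod n) = y $ c"
    using n by (simp add: blk_def i_def mult.commute)
  ultimately show ?thesis by simp
qed

text \<open>The box \<open>Y = [-a, a]\<^sup>n\<^sup>m\<close> has support function \<open>\<eta> \<mapsto> a \<parallel>\<eta>\<parallel>\<^sub>1\<close>, so a point where
  \<open>\<eta>\<close> attains it has \<open>\<eta>\<close> in its normal cone.\<close>

lemma normal_cone_Yset_if_support:
  assumes n: "0 < n" and y0: "y0 \<in> Yset n m a" and \<eta>: "\<eta> \<in> carrier_vec (n * m)"
    and support: "\<And>c. c < n * m \<Longrightarrow> a * \<bar>\<eta> $ c\<bar> \<le> \<eta> $ c * y0 $ c"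
  shows "\<eta> \<in> normal_cone (n * m) (Yset n m a) y0"
proof -
  have "\<eta> \<bullet> (y - y0) \<le> 0" if y: "y \<in> Yset n m a" for y
  proof -
    have "y \<in> carrier_vec (n * m)" "y0 \<in> carrier_vec (n * m)"
      using y y0 by (auto simp: Yset_def)
    then have "\<eta> \<bullet> (y - y0) = (\<Sum>c<n * m. \<eta> $ c * y $ c - \<eta> $ c * y0 $ c)"
      using \<eta> by (simp add: scalar_prod_def atLeast0LessThan algebra_simps)
    also have "\<dots> \<le> 0"
    proof (rule sum_nonpos)
      fix c assume "c \<in> {..<n * m}"
      then have c: "c < n * m" by simp
      have "\<eta> $ c * y $ c \<le> \<bar>\<eta> $ c\<bar> * \<bar>y $ c\<bar>" by (simp add: abs_mult[symmetric])
      also have "\<dots> \<le> a * \<bar>\<eta> $ c\<bar>"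
        using Yset_nth_abs_le[OF n y c] by (metis abs_ge_zero mult.commute mult_left_mono)
      finally show "\<eta> $ c * y $ c - \<eta> $ c * y0 $ c \<le> 0" using support[OF c] by simp
    qed
    finally show ?thesis .
  qed
  then show ?thesis using y0 \<eta> by (simp add: normal_cone_def)
qed

lemma Amat_carrier: "Amat n m \<in> carrier_mat (n * (m - 1)) (n * m)"
  by (simp add: Amat_def)

lemma dim_row_Amat [simp]: "dim_row (Amat n m) = n * (m - 1)"
  by (simp add: Amat_def)

lemma dim_col_Amat [simp]: "dim_col (Amat n m) = n * m"
  by (simp add: Amat_def)

lemma add_block_less:
  fixes n :: nat
  assumes "r < n * (m - 1)"
  shows "r + n < n * m"
proof -
  have "r + n < n * (m - 1) + n" using assms by linarith
  also have "\<dots> = n * m" using assms by (cases m) auto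
  finally show ?thesis .
qed

lemma Amat_mult_vec_nth:
  assumes n: "0 < n" and x: "x \<in> carrier_vec (n * m)" and r: "r < n * (m - 1)"
  shows "(Amat n m *\<^sub>v x) $ r = x $ r - x $ (r + n)"
proof -
  have "(Amat n m *\<^sub>v x) $ r =
      (\<Sum>c<n * m. (if c = r then 1 else if c = r + n then -1 else 0) * x $ c)"
    using r x by (simp add: Amat_def scalar_prod_def row_def atLeast0LessThan)
  also have "\<dots> = (\<Sum>c<n * m. (if c = r then x $ c else 0) + (if c = r + n then - x $ c else 0))"
    using n by (intro sum.cong) auto
  also have "\<dots> = x $ r - x $ (r + n)"
    using add_block_less[OF r] by (simp add: sum.distrib)
  finally show ?thesis .
qed

lemma transpose_Amat_mult_vec_nth:
  assumes n: "0 < n" and v: "v \<in> carrier_vec (n * (m - 1))" and c: "c < n * m"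
  shows "(transpose_mat (Amat n m) *\<^sub>v v) $ c =
     (if c < n * (m - 1) then v $ c else 0) - (if n \<le> c then v $ (c - n) else 0)"
proof -
  have "(transpose_mat (Amat n m) *\<^sub>v v) $ c =
      (\<Sum>r<n * (m - 1). (if c = r then 1 else if c = r + n then -1 else 0) * v $ r)"
    using c v by (simp add: Amat_def scalar_prod_def col_def atLeast0LessThan)
  also have "\<dots> = (\<Sum>r<n * (m - 1). (if r = c then v $ r else 0)
                                   + (if r = c - n \<and> n \<le> c then - v $ r else 0))"
    using n by (intro sum.cong) auto
  also have "\<dots> = (if c < n * (m - 1) then v $ c else 0) - (if n \<le> c then v $ (c - n) else 0)"
    using c n by (cases m) (auto simp: sum.distrib algebra_simps cong: if_cong)
  finally show ?thesis .
qed

lemma transpose_Amat_kernel_trivial: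
  assumes n: "0 < n" and v: "v \<in> carrier_vec (n * (m - 1))"
    and Av: "transpose_mat (Amat n m) *\<^sub>v v = 0\<^sub>v (n * m)"
  shows "v = 0\<^sub>v (n * (m - 1))"
proof -
  have "v $ c = 0" if "c < n * (m - 1)" for c
    using that
  proof (induction c rule: less_induct)
    case (less c)
    have "c < n * m" using add_block_less[OF less.prems] by simp
    then have "(transpose_mat (Amat n m) *\<^sub>v v) $ c = 0" using Av by simp
    then have "v $ c = (if n \<le> c then v $ (c - n) else 0)"
      using transpose_Amat_mult_vec_nth[OF n v \<open>c < n * m\<close>] less.prems by simp
    moreover have "n \<le> c \<Longrightarrow> v $ (c - n) = 0"
      using less.IH less.prems n by simp
    ultimately show ?case by (auto split: if_splits)
  qed
  then show ?thesis using v by (intro eq_vecI) auto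
qed

definition block_sign :: "nat \<Rightarrow> nat \<Rightarrow> real" where
  "block_sign n c = (if even (c div n) then 1 else -1)"

lemma block_sign_add_block: "0 < n \<Longrightarrow> block_sign n (c + n) = - block_sign n c"
  by (simp add: block_sign_def)

lemma dim_ybar [simp]: "dim_vec (ybar n m a) = n * m"
  by (simp add: ybar_def)

lemma ybar_carrier: "ybar n m a \<in> carrier_vec (n * m)"
  by (simp add: carrier_dim_vec)

lemma ybar_nth: "c < n * m \<Longrightarrow> ybar n m a $ c = block_sign n c * a"
  by (simp add: ybar_def block_sign_def)

lemma ybar_in_Yset:
  assumes "0 \<le> a"
  shows "ybar n m a \<in> Yset n m a"
proof -
  have "(i - 1) * n + j < n * m" if "1 \<le> i" "i \<le> m" "j < n" for i j
  proof -
    have "(i - 1) * n + j < i * n" using that by (cases i) auto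
    also have "\<dots> \<le> n * m" using that by (simp add: mult.commute)
    finally show ?thesis .
  qed
  then show ?thesis
    using assms by (auto simp: Yset_def Zbox_def blk_def ybar_def)
qed

lemma Amat_mult_ybar_nth:
  assumes n: "0 < n" and r: "r < n * (m - 1)"
  shows "(Amat n m *\<^sub>v ybar n m a) $ r = 2 * a * block_sign n r"
proof -
  have "r + n < n * m" "r < n * m" using add_block_less[OF r] by simp_all
  then show ?thesis
    using Amat_mult_vec_nth[OF n ybar_carrier r] ybar_nth block_sign_add_block[OF n, of r]
    by simp
qed

lemma transpose_Amat_Amat_ybar_nth:
  assumes n: "0 < n" and c: "c < n * m"
  shows "(transpose_mat (Amat n m) *\<^sub>v (Amat n m *\<^sub>v ybar n m a)) $ c =
    2 * a * block_sign n c * (of_bool (c < n * (m - 1)) + of_bool (n \<le> c))"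
proof -
  have "c - n < n * (m - 1)" if "n \<le> c"
    using that c n by (cases m) (auto simp: algebra_simps)
  moreover have "block_sign n (c - n) = - block_sign n c" if "n \<le> c"
    using block_sign_add_block[OF n, of "c - n"] that by simp
  ultimately show ?thesis
    using transpose_Amat_mult_vec_nth[OF n _ c, of "Amat n m *\<^sub>v ybar n m a"]
      Amat_mult_ybar_nth[OF n]
    by (auto simp: carrier_dim_vec algebra_simps)
qed

lemma transpose_Amat_Amat_ybar_normal:
  assumes n: "0 < n" and a: "0 \<le> a"
  shows "transpose_mat (Amat n m) *\<^sub>v (Amat n m *\<^sub>v ybar n m a)
           \<in> normal_cone (n * m) (Yset n m a) (ybar n m a)"
proof (rule normal_cone_Yset_if_support[OF n ybar_in_Yset[OF a]])
  fix c assume c: "c < n * m"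
  have "block_sign n c * block_sign n c = 1" "\<bar>block_sign n c\<bar> = 1"
    by (simp_all add: block_sign_def)
  then show "a * \<bar>(transpose_mat (Amat n m) *\<^sub>v (Amat n m *\<^sub>v ybar n m a)) $ c\<bar>
      \<le> (transpose_mat (Amat n m) *\<^sub>v (Amat n m *\<^sub>v ybar n m a)) $ c * ybar n m a $ c"
    using transpose_Amat_Amat_ybar_nth[OF n c] ybar_nth[OF c] a
    by (simp add: abs_mult algebra_simps)
qed (simp add: carrier_dim_vec)

theorem lemma2:
  fixes m n :: nat and fs :: "nat \<Rightarrow> real vec \<Rightarrow> real" and a \<beta> :: real
  assumes "m \<ge> 2" and "n \<ge> 1"
    and "\<forall>i\<in>{1..m}. lsc_vec n (fs i) \<and> proper_vec n (\<lambda>x. ereal (fs i x))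
                      \<and> strictly_convex_vec n (fs i)"
    and "a \<ge> 0"
    and "\<forall>yb\<in>bnd (n * m) (Yset n m a). \<exists>ys \<nu>s.
           (\<forall>k. ys k \<in> Yset n m a) \<and> (\<lambda>k. enorm (ys k - yb)) \<longlonglongrightarrow> 0 \<and>
           (\<forall>k. \<nu>s k \<in> subdiff (n * m)
                  (\<lambda>y. ereal (f0 n m fs y) + indic (Yset n m a) y) (ys k)) \<and>
           limsup (\<lambda>k. ereal (enorm (\<nu>s k))) < \<infinity>"
    and "\<beta> > 0"
  shows "\<exists>\<eta> \<mu>. \<eta> \<in> carrier_vec (n * m) \<and> \<mu> \<in> carrier_vec (n * (m - 1)) \<and>
     Amat n m *\<^sub>v ybar n m a =
       \<beta> \<cdot>\<^sub>v (the (mat_inverse (Amat n m * transpose_mat (Amat n m))) *\<^sub>v (Amat n m *\<^sub>v \<eta>)) \<and>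
     \<eta> \<in> normal_cone (n * m) (Yset n m a) (ybar n m a) \<and>
     transpose_mat (Amat n m) *\<^sub>v \<mu> = \<eta>"
proof -
  have n: "0 < n" and a: "0 \<le> a" and \<beta>: "0 < \<beta>" using assms by auto
  let ?A = "Amat n m" and ?y = "ybar n m a"
  define \<mu> where "\<mu> = (1 / \<beta>) \<cdot>\<^sub>v (?A *\<^sub>v ?y)"
  define \<eta> where "\<eta> = transpose_mat ?A *\<^sub>v \<mu>"
  have \<mu>: "\<mu> \<in> carrier_vec (n * (m - 1))" and \<eta>: "\<eta> \<in> carrier_vec (n * m)"
    by (simp_all add: \<mu>_def \<eta>_def carrier_dim_vec)
  obtain B where B: "mat_inverse (?A * transpose_mat ?A) = Some B"
    using mat_inverse_gram_not_None[OF Amat_carrier transpose_Amat_kernel_trivial[OF n]] by blast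
  have A: "?A \<in> carrier_mat (n * (m - 1)) (n * m)" by (rule Amat_carrier)
  have "B *\<^sub>v (?A *\<^sub>v \<eta>) = B *\<^sub>v ((?A * transpose_mat ?A) *\<^sub>v \<mu>)"
    using A \<mu> by (simp add: \<eta>_def)
  also have "\<dots> = \<mu>"
    using mat_inverse_mult_vec_cancel[OF _ B \<mu>] A by simp
  finally have "B *\<^sub>v (?A *\<^sub>v \<eta>) = \<mu>" .
  then have inverse_eq: "?A *\<^sub>v ?y = \<beta> \<cdot>\<^sub>v (B *\<^sub>v (?A *\<^sub>v \<eta>))"
    using \<beta> by (simp add: \<mu>_def smult_smult_assoc)
  have "\<eta> = (1 / \<beta>) \<cdot>\<^sub>v (transpose_mat ?A *\<^sub>v (?A *\<^sub>v ?y))"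
    using mult_mat_vec[of "transpose_mat ?A" "n * m" "n * (m - 1)" "?A *\<^sub>v ?y"] A
    by (simp add: \<eta>_def \<mu>_def carrier_dim_vec)
  moreover have "Yset n m a \<subseteq> carrier_vec (n * m)" by (auto simp: Yset_def)
  ultimately have "\<eta> \<in> normal_cone (n * m) (Yset n m a) ?y"
    using normal_cone_smult transpose_Amat_Amat_ybar_normal[OF n a] \<beta> by simp
  then show ?thesis using \<eta> \<mu> B inverse_eq \<eta>_def by auto
qed

end
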